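(* For $m,n\in\mathbb N$ define groups by generators and relations $G_{m,n}=\langle s,t\mid s^2,\ t^m,\ (st^{-1}st)^n\rangle$ and $H_{m,n}=\langle s_1,\dots,s_m,T\mid s_i^2,\ T^m,\ (s_is_{i+1})^n,\ T^{-1}s_iTs_{i+1}\ (1\le i\le m)\rangle$, with the convention $s_{m+1}=s_1$. Then there is a group isomorphism $\varphi:G_{m,n}\to H_{m,n}$ with $\varphi(s)=s_m$ and $\varphi(t)=T$. Moreover, $G_{m,n}$ is finite if and only if $m=1$ or $m=2$ or $n=1$ or $(m,n)=(3,2)$.
   Context: $\mathbb N=\{1,2,3,\dots\}$. A relator $r$ in a presentation means the relation $r=1$. *)

theory Defs
  imports "HOL-Algebra.Group"
begin

text \<open>Words over generators of type 'a: a letter (x, False) is x, (x, True) is x inverse.\<close>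
type_synonym 'a word = "('a \<times> bool) list"

inductive pres_eq :: "'a word set \<Rightarrow> 'a word \<Rightarrow> 'a word \<Rightarrow> bool" for R where
  pres_refl: "pres_eq R u u"
| pres_sym: "pres_eq R u v \<Longrightarrow> pres_eq R v u"
| pres_trans: "pres_eq R u v \<Longrightarrow> pres_eq R v w \<Longrightarrow> pres_eq R u w"
| pres_cancel: "pres_eq R (u @ [(a, b), (a, \<not> b)] @ v) (u @ v)"
| pres_rel: "r \<in> R \<Longrightarrow> pres_eq R (u @ r @ v) (u @ v)"

definition words_on :: "'a set \<Rightarrow> 'a word set" where
  "words_on X = {w. \<forall>(a, b)\<in>set w. a \<in> X}"

definition pclass :: "'a set \<Rightarrow> 'a word set \<Rightarrow> 'a word \<Rightarrow> 'a word set" where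
  "pclass X R u = {w \<in> words_on X. pres_eq R w u}"

definition presented_group :: "'a set \<Rightarrow> 'a word set \<Rightarrow> ('a word set) monoid" where
  "presented_group X R =
     \<lparr> carrier = pclass X R ` words_on X,
       mult = (\<lambda>A B. {w \<in> words_on X. \<exists>u\<in>A. \<exists>v\<in>B. pres_eq R w (u @ v)}),
       one = pclass X R [] \<rparr>"

definition gen :: "'a set \<Rightarrow> 'a word set \<Rightarrow> 'a \<Rightarrow> 'a word set" where
  "gen X R x = pclass X R [(x, False)]"

text \<open>G_{m,n} = < s, t | s^2, t^m, (s t^-1 s t)^n >, with s = 0, t = 1.\<close>
definition G_rels :: "nat \<Rightarrow> nat \<Rightarrow> nat word set" where
  "G_rels m n = { [(0, False), (0, False)],
                  replicate m (1, False),
                  concat (replicate n [(0, False), (1, True), (0, False), (1, False)]) }"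

text \<open>H_{m,n} = < s_1..s_m, T | s_i^2, T^m, (s_i s_{i+1})^n, T^-1 s_i T s_{i+1} >,
  with s_i = i (1 \<le> i \<le> m), T = 0, and s_{m+1} = s_1.\<close>
definition G_gens :: "nat set" where "G_gens = {0, 1}"

definition H_gens :: "nat \<Rightarrow> nat set" where "H_gens m = {0..m}"

definition H_succ :: "nat \<Rightarrow> nat \<Rightarrow> nat" where
  "H_succ m i = (if i = m then 1 else i + 1)"

definition H_rels :: "nat \<Rightarrow> nat \<Rightarrow> nat word set" where
  "H_rels m n = {replicate m (0, False)} \<union>
     (\<Union>i\<in>{1..m}. { [(i, False), (i, False)],
                    concat (replicate n [(i, False), (H_succ m i, False)]),
                    [(0, True), (i, False), (0, False), (H_succ m i, False)] })"

end

theory Submission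
  imports Defs Complex_Main
begin

text \<open>The isomorphism is a Tietze transformation: \<open>s\<^sub>i \<mapsto> t\<^sup>-\<^sup>i s t\<^sup>i\<close>, \<open>T \<mapsto> t\<close> and back
  \<open>s \<mapsto> s\<^sub>m\<close>, \<open>t \<mapsto> T\<close>; the relators \<open>T\<^sup>-\<^sup>1 s\<^sub>i T s\<^sub>i\<^sub>+\<^sub>1\<close> say that conjugation by \<open>T\<close> permutes
  the \<open>s\<^sub>i\<close> cyclically, which turns \<open>(s\<^sub>i s\<^sub>i\<^sub>+\<^sub>1)\<^sup>n\<close> into a conjugate of \<open>(s t\<^sup>-\<^sup>1 s t)\<^sup>n\<close>.

  In the four exceptional cases a finite set of words that is closed, up to the relations,
  under right multiplication by \<open>s\<close> and \<open>t\<close> represents every element: \<open>G\<^sub>1\<^sub>,\<^sub>n\<close> has order 2,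
  \<open>G\<^sub>m\<^sub>,\<^sub>1\<close> is abelian of order at most \<open>2m\<close>, \<open>G\<^sub>2\<^sub>,\<^sub>n\<close> is dihedral of order at most \<open>4n\<close>, and
  \<open>G\<^sub>3\<^sub>,\<^sub>2\<close> has at most 24 elements.
  Otherwise \<open>G\<^sub>m\<^sub>,\<^sub>n\<close> acts on \<open>\<int>/m \<times> \<complex>\<close>, \<open>t\<close> rotating the index and \<open>s\<close> acting at index \<open>i\<close> by a
  reflection \<open>F\<^sub>i\<close> of the plane; the relators act trivially when consecutive \<open>F\<^sub>i\<close> generate a
  dihedral group of order dividing \<open>2n\<close>. Suitable reflections make \<open>s t s t\<^sup>-\<^sup>1 s t\<^sup>-\<^sup>1 s t\<close> act as
  a nonzero translation, an element of infinite order.\<close>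

section \<open>Presentations\<close>

declare pres_eq.pres_trans [trans]

lemma pres_eq_sym_iff: "pres_eq R u v \<longleftrightarrow> pres_eq R v u"
  using pres_sym by blast

lemma pres_eq_context: "pres_eq R u v \<Longrightarrow> pres_eq R (p @ u @ q) (p @ v @ q)"
proof (induction rule: pres_eq.induct)
  case (pres_cancel u a b v)
  show ?case using pres_eq.pres_cancel[of R "p @ u" a b "v @ q"] by simp
next
  case (pres_rel r u v)
  show ?case using pres_eq.pres_rel[OF pres_rel, of "p @ u" "v @ q"] by simp
qed (auto intro: pres_eq.intros)

lemma pres_eq_append: "pres_eq R u u' \<Longrightarrow> pres_eq R v v' \<Longrightarrow> pres_eq R (u @ v) (u' @ v')"
  by (metis pres_eq_context append_Nil append_Nil2 pres_trans)

lemma pres_eq_relator: "r \<in> R \<Longrightarrow> pres_eq R r []"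
  using pres_rel[of r R "[]" "[]"] by simp

lemma pres_eq_cancel_pair: "pres_eq R [(a, b), (a, \<not> b)] []"
  using pres_cancel[of R "[]" a b "[]"] by simp

lemma pres_eq_concat_replicate:
  "pres_eq R u u' \<Longrightarrow> pres_eq R (concat (replicate k u)) (concat (replicate k u'))"
  by (induction k) (auto intro: pres_eq_append pres_refl)

definition inv_word :: "'a word \<Rightarrow> 'a word" where
  "inv_word w = rev (map (\<lambda>(a, b). (a, \<not> b)) w)"

lemma inv_word_simps [simp]:
  "inv_word [] = []"
  "inv_word (x # w) = inv_word w @ [(fst x, \<not> snd x)]"
  "inv_word (u @ v) = inv_word v @ inv_word u"
  "inv_word (inv_word w) = w"
  by (auto simp: inv_word_def case_prod_beta rev_map comp_def)

lemma inv_word_replicate [simp]: "inv_word (replicate k (a, b)) = replicate k (a, \<not> b)"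
  by (induction k) (auto simp: replicate_append_same)

lemma pres_eq_inv_right: "pres_eq R (w @ inv_word w) []"
proof (induction w)
  case (Cons x w)
  have "pres_eq R ([x] @ (w @ inv_word w) @ [(fst x, \<not> snd x)]) ([x] @ [] @ [(fst x, \<not> snd x)])"
    by (rule pres_eq_context[OF Cons])
  also have "pres_eq R \<dots> []"
    using pres_eq_cancel_pair[of R "fst x" "snd x"] by simp
  finally show ?case by simp
qed (simp add: pres_refl)

lemma pres_eq_inv_left: "pres_eq R (inv_word w @ w) []"
  using pres_eq_inv_right[of R "inv_word w"] by simp

lemma pres_eq_replicate_cancel:
  assumes "b' \<longleftrightarrow> \<not> b"
  shows "pres_eq R (p @ replicate k (a, b) @ replicate k (a, b') @ q) (p @ q)"
  using pres_eq_context[OF pres_eq_inv_right[of R "replicate k (a, b)"], of p q] assms by simp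

lemma pres_eq_conj_concat:
  "pres_eq R (inv_word p @ concat ws @ p) (concat (map (\<lambda>w. inv_word p @ w @ p) ws))"
proof (induction ws)
  case Nil
  show ?case using pres_eq_inv_left[of R p] by simp
next
  case (Cons w ws)
  have "pres_eq R (inv_word p @ concat (w # ws) @ p)
          ((inv_word p @ w) @ (p @ inv_word p) @ (concat ws @ p))"
    using pres_eq_context[OF pres_eq_inv_right[of R p, THEN pres_sym], of "inv_word p @ w" "concat ws @ p"]
    by simp
  also have "pres_eq R \<dots> ((inv_word p @ w @ p) @ concat (map (\<lambda>w. inv_word p @ w @ p) ws))"
    using pres_eq_append[OF pres_refl[of R "inv_word p @ w @ p"] Cons.IH] by simp
  finally show ?case by simp
qed

lemma pres_eq_conj_power:
  "pres_eq R (concat (replicate k (inv_word p @ w @ p))) (inv_word p @ concat (replicate k w) @ p)"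
  using pres_eq_conj_concat[of R p "replicate k w"] by (simp add: map_replicate pres_eq_sym_iff)

lemma pres_eq_conj_relation:
  assumes "pres_eq R (concat ws) []"
    and "list_all2 (\<lambda>w v. pres_eq R (inv_word p @ w @ p) v) ws vs"
  shows "pres_eq R (concat vs) []"
proof -
  have "pres_eq R (concat (map (\<lambda>w. inv_word p @ w @ p) ws)) (concat vs)"
    using assms(2)
  proof (induction rule: list_all2_induct)
    case (Cons w ws v vs)
    show ?case using pres_eq_append[OF Cons.hyps(1) Cons.IH] by simp
  qed (simp add: pres_refl)
  then have "pres_eq R (concat vs) (inv_word p @ concat ws @ p)"
    using pres_eq_conj_concat[of R p ws] by (meson pres_sym pres_trans)
  also have "pres_eq R \<dots> (inv_word p @ [] @ p)"
    by (rule pres_eq_context[OF assms(1)])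
  also have "pres_eq R \<dots> []"
    using pres_eq_inv_left[of R p] by simp
  finally show ?thesis .
qed

lemma pres_eq_commute_involutions:
  assumes "pres_eq R (x @ y @ x @ y) []" "pres_eq R (x @ x) []" "pres_eq R (y @ y) []"
  shows "pres_eq R (x @ y) (y @ x)"
proof -
  have "pres_eq R (y @ x) ((y @ x) @ (x @ y @ x @ y) @ [])"
    using pres_eq_context[OF assms(1), of "y @ x" "[]"] by (simp add: pres_eq_sym_iff)
  also have "\<dots> = y @ (x @ x) @ (y @ x @ y)" by simp
  also have "pres_eq R \<dots> (y @ [] @ (y @ x @ y))" by (rule pres_eq_context[OF assms(2)])
  also have "\<dots> = [] @ (y @ y) @ (x @ y)" by simp
  also have "pres_eq R \<dots> ([] @ [] @ (x @ y))" by (rule pres_eq_context[OF assms(3)])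
  finally show ?thesis by (simp add: pres_eq_sym_iff)
qed

lemma pres_eq_inverse_letter:
  assumes "pres_eq R (replicate (Suc k) (a, False)) []"
  shows "pres_eq R [(a, True)] (replicate k (a, False))"
proof -
  have "pres_eq R [(a, True)] ([(a, True)] @ replicate (Suc k) (a, False) @ [])"
    using pres_eq_context[OF assms, of "[(a, True)]" "[]"] by (simp add: pres_eq_sym_iff)
  also have "\<dots> = [] @ [(a, True), (a, False)] @ replicate k (a, False)" by simp
  also have "pres_eq R \<dots> ([] @ [] @ replicate k (a, False))"
    using pres_eq_context[OF pres_eq_cancel_pair[of R a True], of "[]" "replicate k (a, False)"] by simp
  finally show ?thesis by simp
qed

lemma words_on_append [simp]: "u @ v \<in> words_on X \<longleftrightarrow> u \<in> words_on X \<and> v \<in> words_on X"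
  by (auto simp: words_on_def)

lemma words_on_Cons [simp]: "x # v \<in> words_on X \<longleftrightarrow> fst x \<in> X \<and> v \<in> words_on X"
  by (auto simp: words_on_def)

lemma words_on_Nil [simp]: "[] \<in> words_on X"
  by (simp add: words_on_def)

lemma words_on_replicate [simp]: "replicate k x \<in> words_on X \<longleftrightarrow> k = 0 \<or> fst x \<in> X"
  by (induction k) auto

lemma words_on_concat_replicate: "w \<in> words_on X \<Longrightarrow> concat (replicate k w) \<in> words_on X"
  by (induction k) auto

lemma words_on_inv_word [simp]: "inv_word w \<in> words_on X \<longleftrightarrow> w \<in> words_on X"
  by (induction w) auto

lemma carrier_presented_group: "carrier (presented_group X R) = pclass X R ` words_on X"
  by (simp add: presented_group_def)

lemma pclass_eq_iff:
  assumes "u \<in> words_on X" "v \<in> words_on X"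
  shows "pclass X R u = pclass X R v \<longleftrightarrow> pres_eq R u v"
  using assms unfolding pclass_def by (auto intro: pres_refl pres_trans pres_sym)

lemma pclass_mult:
  assumes "u \<in> words_on X" "v \<in> words_on X"
  shows "pclass X R u \<otimes>\<^bsub>presented_group X R\<^esub> pclass X R v = pclass X R (u @ v)"
  using assms unfolding presented_group_def pclass_def
  by (auto intro: pres_trans pres_eq_append pres_refl)

definition subst :: "('a \<Rightarrow> 'b word) \<Rightarrow> 'a word \<Rightarrow> 'b word" where
  "subst f w = concat (map (\<lambda>(a, b). if b then inv_word (f a) else f a) w)"

lemma subst_simps [simp]:
  "subst f [] = []"
  "subst f (u @ v) = subst f u @ subst f v"
  "subst f ((a, b) # w) = (if b then inv_word (f a) else f a) @ subst f w"
  by (auto simp: subst_def)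

lemma subst_replicate: "subst f (replicate k x) = concat (replicate k (subst f [x]))"
  by (induction k) (auto simp: subst_def)

lemma subst_concat_replicate: "subst f (concat (replicate k w)) = concat (replicate k (subst f w))"
  by (induction k) auto

lemma subst_inv_word: "subst f (inv_word w) = inv_word (subst f w)"
  by (induction w) auto

lemma subst_subst: "subst g (subst f w) = subst (\<lambda>a. subst g (f a)) w"
  by (induction w) (auto simp: subst_inv_word)

lemma subst_in_words_on:
  assumes "\<And>a. a \<in> X \<Longrightarrow> f a \<in> words_on Y" "w \<in> words_on X"
  shows "subst f w \<in> words_on Y"
  using assms(2) by (induction w) (auto simp: assms(1))

lemma pres_eq_subst:
  assumes rel: "\<And>r. r \<in> R \<Longrightarrow> pres_eq S (subst f r) []"
  shows "pres_eq R u v \<Longrightarrow> pres_eq S (subst f u) (subst f v)"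
proof (induction rule: pres_eq.induct)
  case (pres_cancel u a b v)
  have "pres_eq S (subst f [(a, b), (a, \<not> b)]) []"
    using pres_eq_inv_right[of S "f a"] pres_eq_inv_left[of S "f a"] by (cases b) auto
  then show ?case
    using pres_eq_context[of S "subst f [(a, b), (a, \<not> b)]" "[]" "subst f u" "subst f v"] by simp
next
  case (pres_rel r u v)
  show ?case using pres_eq_context[OF rel[OF pres_rel], of "subst f u" "subst f v"] by simp
qed (auto intro: pres_eq.intros)

lemma pres_eq_subst_self:
  assumes "\<And>a. a \<in> X \<Longrightarrow> pres_eq R (f a) [(a, False)]" "w \<in> words_on X"
  shows "pres_eq R (subst f w) w"
  using assms(2)
proof (induction w)
  case (Cons x w)
  obtain a b where x: "x = (a, b)" by force
  have fa: "pres_eq R (f a) [(a, False)]" using Cons x assms(1) by simp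
  have "pres_eq R (if b then inv_word (f a) else f a) [(a, b)]"
  proof (cases b)
    case True
    have "pres_eq R (inv_word (f a)) (inv_word (f a) @ [(a, False)] @ [(a, True)])"
      using pres_eq_context[OF pres_eq_cancel_pair[of R a False], of "inv_word (f a)" "[]"]
      by (simp add: pres_eq_sym_iff)
    also have "pres_eq R \<dots> (inv_word (f a) @ f a @ [(a, True)])"
      using pres_eq_context[OF fa, of "inv_word (f a)" "[(a, True)]"] by (simp add: pres_eq_sym_iff)
    also have "pres_eq R \<dots> ([] @ [(a, True)])"
      using pres_eq_context[OF pres_eq_inv_left[of R "f a"], of "[]" "[(a, True)]"] by simp
    finally show ?thesis using True by simp
  qed (use fa in simp)
  then show ?case using pres_eq_append[of R _ "[(a, b)]" "subst f w" w] Cons x by simp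
qed (simp add: pres_refl)

lemma pclass_subst:
  assumes "\<And>r. r \<in> R \<Longrightarrow> pres_eq S (subst f r) []" "u \<in> words_on X"
  shows "{w \<in> words_on Y. \<exists>u'\<in>pclass X R u. pres_eq S w (subst f u')} = pclass Y S (subst f u)"
  unfolding pclass_def using assms
  by (auto intro: pres_refl) (metis pres_trans pres_eq_subst[OF assms(1)])

lemma presented_group_iso_by_subst:
  assumes fw: "\<And>a. a \<in> X \<Longrightarrow> f a \<in> words_on Y" and gw: "\<And>a. a \<in> Y \<Longrightarrow> g a \<in> words_on X"
    and fr: "\<And>r. r \<in> R \<Longrightarrow> pres_eq S (subst f r) []"
    and gr: "\<And>r. r \<in> S \<Longrightarrow> pres_eq R (subst g r) []"
    and gf: "\<And>a. a \<in> X \<Longrightarrow> pres_eq R (subst g (f a)) [(a, False)]"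
    and fg: "\<And>a. a \<in> Y \<Longrightarrow> pres_eq S (subst f (g a)) [(a, False)]"
  shows "\<exists>\<phi>. \<phi> \<in> iso (presented_group X R) (presented_group Y S)
             \<and> (\<forall>u \<in> words_on X. \<phi> (pclass X R u) = pclass Y S (subst f u))"
proof (intro exI conjI ballI)
  define \<phi> where "\<phi> A = {w \<in> words_on Y. \<exists>u\<in>A. pres_eq S w (subst f u)}" for A
  define \<psi> where "\<psi> B = {w \<in> words_on X. \<exists>u\<in>B. pres_eq R w (subst g u)}" for B
  have \<phi>: "\<phi> (pclass X R u) = pclass Y S (subst f u)" if "u \<in> words_on X" for u
    unfolding \<phi>_def by (rule pclass_subst[OF fr that])
  have \<psi>: "\<psi> (pclass Y S u) = pclass X R (subst g u)" if "u \<in> words_on Y" for u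
    unfolding \<psi>_def by (rule pclass_subst[OF gr that])
  have sf: "subst f u \<in> words_on Y" if "u \<in> words_on X" for u by (rule subst_in_words_on[OF fw that])
  have sg: "subst g u \<in> words_on X" if "u \<in> words_on Y" for u by (rule subst_in_words_on[OF gw that])
  have \<psi>\<phi>: "\<psi> (\<phi> (pclass X R u)) = pclass X R u" if "u \<in> words_on X" for u
    using pres_eq_subst_self[OF gf that] pclass_eq_iff[OF sg[OF sf[OF that]] that]
    by (simp add: that \<phi> \<psi> sf subst_subst)
  have \<phi>\<psi>: "\<phi> (\<psi> (pclass Y S u)) = pclass Y S u" if "u \<in> words_on Y" for u
    using pres_eq_subst_self[OF fg that] pclass_eq_iff[OF sf[OF sg[OF that]] that]
    by (simp add: that \<phi> \<psi> sg subst_subst)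
  have "\<phi> \<in> hom (presented_group X R) (presented_group Y S)"
    by (rule homI) (auto simp: carrier_presented_group \<phi> sf pclass_mult)
  moreover have "bij_betw \<phi> (carrier (presented_group X R)) (carrier (presented_group Y S))"
    by (rule bij_betw_byWitness[where f' = \<psi>])
      (use \<psi>\<phi> \<phi>\<psi> in \<open>auto simp: carrier_presented_group \<phi> \<psi> sf sg\<close>)
  ultimately show "\<phi> \<in> iso (presented_group X R) (presented_group Y S)"
    by (simp add: iso_def)
  show "\<phi> (pclass X R u) = pclass Y S (subst f u)" if "u \<in> words_on X" for u
    using \<phi> that .
qed

lemma pres_eq_closed_append_replicate:
  assumes "v \<in> W" and closed: "\<And>v. v \<in> W \<Longrightarrow> \<exists>v'\<in>W. pres_eq R (v @ [x]) v'"
  shows "\<exists>v'\<in>W. pres_eq R (v @ replicate k x) v'"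
proof (induction k)
  case 0
  show ?case using assms(1) pres_refl by force
next
  case (Suc k)
  then obtain v' where v': "v' \<in> W" "pres_eq R (v @ replicate k x) v'" by blast
  obtain v'' where v'': "v'' \<in> W" "pres_eq R (v' @ [x]) v''" using closed[OF v'(1)] by blast
  have "v @ replicate (Suc k) x = (v @ replicate k x) @ [x]" by (simp add: replicate_append_same)
  also have "pres_eq R \<dots> (v' @ [x])" by (rule pres_eq_append[OF v'(2) pres_refl])
  also have "pres_eq R \<dots> v''" by (rule v''(2))
  finally show ?case using v''(1) by blast
qed

lemma finite_presented_group_if_closed:
  assumes "finite W" "W \<subseteq> words_on X" "[] \<in> W"
    and closed: "\<And>v a. v \<in> W \<Longrightarrow> a \<in> X \<Longrightarrow> \<exists>v'\<in>W. pres_eq R (v @ [(a, False)]) v'"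
    and torsion: "\<And>a. a \<in> X \<Longrightarrow> \<exists>k. pres_eq R [(a, True)] (replicate k (a, False))"
  shows "finite (carrier (presented_group X R))"
proof -
  have reach: "\<exists>v\<in>W. pres_eq R w v" if "w \<in> words_on X" for w
    using that
  proof (induction w rule: rev_induct)
    case Nil
    show ?case using \<open>[] \<in> W\<close> pres_refl by blast
  next
    case (snoc x w)
    obtain a b where x: "x = (a, b)" by force
    have a: "a \<in> X" using snoc.prems x by simp
    obtain v where v: "v \<in> W" "pres_eq R w v" using snoc by auto
    obtain k where k: "pres_eq R [x] (replicate k (a, False))"
    proof (cases b)
      case False
      then show ?thesis using that[of 1] x by (simp add: pres_refl)
    qed (use torsion[OF a] x in auto)
    obtain v' where "v' \<in> W" "pres_eq R (v @ replicate k (a, False)) v'"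
      using pres_eq_closed_append_replicate[OF v(1) closed[OF _ a]] by blast
    moreover have "pres_eq R (w @ [x]) (v @ replicate k (a, False))"
      by (rule pres_eq_append[OF v(2) k])
    ultimately show ?case using pres_trans by blast
  qed
  have "carrier (presented_group X R) \<subseteq> pclass X R ` W"
  proof
    fix A assume "A \<in> carrier (presented_group X R)"
    then obtain w where w: "w \<in> words_on X" "A = pclass X R w"
      by (auto simp: carrier_presented_group)
    with reach obtain v where "v \<in> W" "pres_eq R w v" by blast
    then show "A \<in> pclass X R ` W"
      using w \<open>W \<subseteq> words_on X\<close> pclass_eq_iff by blast
  qed
  then show ?thesis using \<open>finite W\<close> finite_subset by blast
qed

lemma fold_action_pres_eq:
  assumes Y: "\<And>x y. y \<in> Y \<Longrightarrow> act x y \<in> Y"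
    and cancel: "\<And>a b y. y \<in> Y \<Longrightarrow> act (a, \<not> b) (act (a, b) y) = y"
    and rel: "\<And>r y. r \<in> R \<Longrightarrow> y \<in> Y \<Longrightarrow> fold act r y = y"
    and "pres_eq R u v" "y \<in> Y"
  shows "fold act u y = fold act v y"
proof -
  have fold_in: "fold act w y \<in> Y" if "y \<in> Y" for w y
    using that by (induction w arbitrary: y) (auto simp: Y)
  have "\<forall>y\<in>Y. fold act u y = fold act v y"
    using \<open>pres_eq R u v\<close> by induction (auto simp: cancel rel fold_in)
  then show ?thesis using \<open>y \<in> Y\<close> by blast
qed

section \<open>The isomorphism\<close>

abbreviation \<sigma> :: "nat \<times> bool" where "\<sigma> \<equiv> (0, False)"
abbreviation \<tau> :: "nat \<times> bool" where "\<tau> \<equiv> (1, False)"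
abbreviation \<tau>' :: "nat \<times> bool" where "\<tau>' \<equiv> (1, True)"

lemma G_rels_mem:
  "[\<sigma>, \<sigma>] \<in> G_rels m n"
  "replicate m \<tau> \<in> G_rels m n"
  "concat (replicate n [\<sigma>, \<tau>', \<sigma>, \<tau>]) \<in> G_rels m n"
  unfolding G_rels_def by auto

lemma G_s_squared: "pres_eq (G_rels m n) (p @ [\<sigma>, \<sigma>] @ q) (p @ q)"
  using pres_eq_context[OF pres_eq_relator[OF G_rels_mem(1)]] by simp

lemma G_t_power: "pres_eq (G_rels m n) (p @ replicate m \<tau> @ q) (p @ q)"
  using pres_eq_context[OF pres_eq_relator[OF G_rels_mem(2)]] by simp

lemma G_t_inv_power: "pres_eq (G_rels m n) (p @ replicate m \<tau>' @ q) (p @ q)"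
proof -
  have "pres_eq (G_rels m n) (replicate m \<tau>') (replicate m \<tau>' @ replicate m \<tau>)"
    using G_t_power[of m n "replicate m \<tau>'" "[]"] by (simp add: pres_eq_sym_iff)
  also have "pres_eq (G_rels m n) \<dots> []"
    using pres_eq_inv_left[of _ "replicate m \<tau>"] by simp
  finally show ?thesis using pres_eq_context[of "G_rels m n" "replicate m \<tau>'" "[]" p q] by simp
qed

lemma G_conj_s_squared:
  "pres_eq (G_rels m n) (replicate i \<tau>' @ [\<sigma>] @ replicate i \<tau> @ replicate i \<tau>' @ [\<sigma>] @ replicate i \<tau>) []"
proof -
  have "pres_eq (G_rels m n) (replicate i \<tau>' @ [\<sigma>] @ replicate i \<tau> @ replicate i \<tau>' @ [\<sigma>] @ replicate i \<tau>)
          ((replicate i \<tau>' @ [\<sigma>]) @ [\<sigma>] @ replicate i \<tau>)"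
    using pres_eq_replicate_cancel[where b = False and b' = True and p = "replicate i \<tau>' @ [\<sigma>]"
        and q = "[\<sigma>] @ replicate i \<tau>"] by simp
  also have "pres_eq (G_rels m n) \<dots> (replicate i \<tau>' @ replicate i \<tau>)"
    using G_s_squared[of m n "replicate i \<tau>'" "replicate i \<tau>"] by simp
  also have "pres_eq (G_rels m n) \<dots> []"
    using pres_eq_replicate_cancel[where b = True and b' = False and p = "[]" and q = "[]"] by simp
  finally show ?thesis .
qed

lemma H_rels_mem:
  assumes "1 \<le> i" "i \<le> m"
  shows "replicate m (0, False) \<in> H_rels m n"
    "[(i, False), (i, False)] \<in> H_rels m n"
    "concat (replicate n [(i, False), (H_succ m i, False)]) \<in> H_rels m n"
    "[(0, True), (i, False), (0, False), (H_succ m i, False)] \<in> H_rels m n"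
  using assms unfolding H_rels_def by auto

lemma H_rels_cases:
  assumes "r \<in> H_rels m n"
  obtains "r = replicate m (0, False)"
  | i where "1 \<le> i" "i \<le> m" "r = [(i, False), (i, False)]"
  | i where "1 \<le> i" "i \<le> m" "r = concat (replicate n [(i, False), (H_succ m i, False)])"
  | i where "1 \<le> i" "i \<le> m" "r = [(0, True), (i, False), (0, False), (H_succ m i, False)]"
  using assms unfolding H_rels_def by auto

lemma H_conj_T:
  assumes "1 \<le> i" "i \<le> m"
  shows "pres_eq (H_rels m n) [(0, True), (i, False), (0, False)] [(H_succ m i, False)]"
proof -
  let ?j = "H_succ m i"
  have j: "1 \<le> ?j" "?j \<le> m" using assms by (auto simp: H_succ_def)
  have "pres_eq (H_rels m n) [(0, True), (i, False), (0, False)]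
          ([] @ [(0, True), (i, False), (0, False), (?j, False)] @ [(?j, False)])"
    using pres_eq_context[OF pres_eq_relator[OF H_rels_mem(2)[OF j]],
        where p = "[(0, True), (i, False), (0, False)]" and q = "[]"]
    by (simp add: pres_eq_sym_iff)
  also have "pres_eq (H_rels m n) \<dots> ([] @ [] @ [(?j, False)])"
    by (rule pres_eq_context[OF pres_eq_relator[OF H_rels_mem(4)[OF assms]]])
  finally show ?thesis by simp
qed

lemma H_conj_T_power:
  assumes "1 \<le> k" "k \<le> m"
  shows "pres_eq (H_rels m n) (replicate k (0, True) @ [(m, False)] @ replicate k (0, False)) [(k, False)]"
  using assms
proof (induction k rule: dec_induct)
  case base
  show ?case using H_conj_T[of m m n] assms by (simp add: H_succ_def)
next
  case (step k)
  have "replicate (Suc k) (0, True) @ [(m, False)] @ replicate (Suc k) (0, False)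
        = [(0, True)] @ (replicate k (0, True) @ [(m, False)] @ replicate k (0, False)) @ [(0, False)]"
    by (simp add: replicate_append_same[symmetric])
  also have "pres_eq (H_rels m n) \<dots> ([(0, True)] @ [(k, False)] @ [(0, False)])"
    by (rule pres_eq_context[OF step.IH]) (use step in simp)
  also have "pres_eq (H_rels m n) \<dots> [(H_succ m k, False)]"
    using H_conj_T[of k m n] step by simp
  finally show ?case using step by (simp add: H_succ_def)
qed

definition G_to_H :: "nat \<Rightarrow> nat \<Rightarrow> nat word" where
  "G_to_H m a = (if a = 0 then [(m, False)] else [(0, False)])"

definition H_to_G :: "nat \<Rightarrow> nat word" where
  "H_to_G i = (if i = 0 then [\<tau>] else replicate i \<tau>' @ [\<sigma>] @ replicate i \<tau>)"

lemma G_rels_hold_in_H: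
  assumes "1 \<le> m" "r \<in> G_rels m n"
  shows "pres_eq (H_rels m n) (subst (G_to_H m) r) []"
proof -
  from assms(2) consider "r = [\<sigma>, \<sigma>]" | "r = replicate m \<tau>"
    | "r = concat (replicate n [\<sigma>, \<tau>', \<sigma>, \<tau>])"
    unfolding G_rels_def by auto
  then show ?thesis
  proof cases
    case 1
    then show ?thesis
      using pres_eq_relator[OF H_rels_mem(2)[of m m n]] assms(1) by (simp add: G_to_H_def)
  next
    case 2
    then show ?thesis
      using pres_eq_relator[OF H_rels_mem(1)[OF assms(1) order_refl, of n]]
      by (simp add: G_to_H_def subst_replicate)
  next
    case 3
    have "subst (G_to_H m) r = concat (replicate n ([(m, False)] @ [(0, True), (m, False), (0, False)]))"
      using 3 assms(1) by (simp add: G_to_H_def subst_concat_replicate)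
    also have "pres_eq (H_rels m n) \<dots> (concat (replicate n ([(m, False)] @ [(H_succ m m, False)])))"
      using H_conj_T[OF assms(1) order_refl]
      by (intro pres_eq_concat_replicate pres_eq_append pres_refl)
    also have "pres_eq (H_rels m n) \<dots> []"
      using pres_eq_relator[OF H_rels_mem(3)[OF assms(1) order_refl]] by simp
    finally show ?thesis .
  qed
qed

lemma H_to_G_shift:
  assumes "1 \<le> i" "i \<le> m"
  shows "pres_eq (G_rels m n) ([\<tau>'] @ H_to_G i @ [\<tau>]) (H_to_G (H_succ m i))"
proof (cases "i < m")
  case True
  then show ?thesis using assms by (simp add: H_to_G_def H_succ_def replicate_append_same pres_refl)
next
  case False
  then have "i = m" "H_succ m i = 1" using assms by (auto simp: H_succ_def)
  have "[\<tau>'] @ H_to_G i @ [\<tau>] = [\<tau>'] @ replicate m \<tau>' @ ([\<sigma>] @ replicate m \<tau> @ [\<tau>])"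
    using assms \<open>i = m\<close> by (simp add: H_to_G_def)
  also have "pres_eq (G_rels m n) \<dots> ([\<tau>'] @ [\<sigma>] @ replicate m \<tau> @ [\<tau>])"
    by (rule G_t_inv_power)
  also have "pres_eq (G_rels m n) \<dots> ([\<tau>', \<sigma>] @ [\<tau>])"
    using G_t_power[of m n "[\<tau>', \<sigma>]" "[\<tau>]"] by simp
  finally show ?thesis using \<open>H_succ m i = 1\<close> by (simp add: H_to_G_def)
qed

lemma H_to_G_neighbours:
  assumes "1 \<le> i" "i \<le> m"
  shows "pres_eq (G_rels m n) (H_to_G i @ H_to_G (H_succ m i))
           (replicate i \<tau>' @ [\<sigma>, \<tau>', \<sigma>, \<tau>] @ replicate i \<tau>)"
proof (cases "i < m")
  case True
  then have "H_to_G i @ H_to_G (H_succ m i)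
      = (replicate i \<tau>' @ [\<sigma>]) @ replicate i \<tau> @ replicate i \<tau>' @ ([\<tau>', \<sigma>, \<tau>] @ replicate i \<tau>)"
    using assms by (simp add: H_to_G_def H_succ_def replicate_append_same[symmetric])
  also have "pres_eq (G_rels m n) \<dots> ((replicate i \<tau>' @ [\<sigma>]) @ ([\<tau>', \<sigma>, \<tau>] @ replicate i \<tau>))"
    by (rule pres_eq_replicate_cancel) simp
  finally show ?thesis by simp
next
  case False
  then have "i = m" "H_succ m i = 1" using assms by (auto simp: H_succ_def)
  then have "H_to_G i @ H_to_G (H_succ m i) = (replicate m \<tau>' @ [\<sigma>]) @ replicate m \<tau> @ [\<tau>', \<sigma>, \<tau>]"
    using assms by (simp add: H_to_G_def)
  also have "pres_eq (G_rels m n) \<dots> ((replicate m \<tau>' @ [\<sigma>]) @ [\<tau>', \<sigma>, \<tau>])"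
    using G_t_power[of m n "replicate m \<tau>' @ [\<sigma>]" "[\<tau>', \<sigma>, \<tau>]"] by simp
  also have "pres_eq (G_rels m n) \<dots> ((replicate m \<tau>' @ [\<sigma>, \<tau>', \<sigma>, \<tau>]) @ replicate m \<tau> @ [])"
    using G_t_power[of m n "replicate m \<tau>' @ [\<sigma>, \<tau>', \<sigma>, \<tau>]" "[]"] by (simp add: pres_eq_sym_iff)
  finally show ?thesis using \<open>i = m\<close> by simp
qed

lemma H_rels_hold_in_G:
  assumes "1 \<le> m" "r \<in> H_rels m n"
  shows "pres_eq (G_rels m n) (subst H_to_G r) []"
proof -
  have square: "pres_eq (G_rels m n) (H_to_G i @ H_to_G i) []" if "1 \<le> i" for i
    using G_conj_s_squared[of m n i] that by (simp add: H_to_G_def)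
  from assms(2) show ?thesis
  proof (cases rule: H_rels_cases)
    case 1
    then show ?thesis using G_t_power[of m n "[]" "[]"] by (simp add: subst_replicate H_to_G_def)
  next
    case (2 i)
    then show ?thesis using square[of i] by simp
  next
    case (3 i)
    have "subst H_to_G r = concat (replicate n (H_to_G i @ H_to_G (H_succ m i)))"
      using 3 by (simp add: subst_concat_replicate)
    also have "pres_eq (G_rels m n) \<dots>
        (concat (replicate n (inv_word (replicate i \<tau>) @ [\<sigma>, \<tau>', \<sigma>, \<tau>] @ replicate i \<tau>)))"
      using H_to_G_neighbours[OF 3(1,2)] by (simp add: pres_eq_concat_replicate)
    also have "pres_eq (G_rels m n) \<dots>
        (inv_word (replicate i \<tau>) @ concat (replicate n [\<sigma>, \<tau>', \<sigma>, \<tau>]) @ replicate i \<tau>)"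
      by (rule pres_eq_conj_power)
    also have "pres_eq (G_rels m n) \<dots> (inv_word (replicate i \<tau>) @ [] @ replicate i \<tau>)"
      by (rule pres_eq_context[OF pres_eq_relator[OF G_rels_mem(3)]])
    also have "pres_eq (G_rels m n) \<dots> []"
      using pres_eq_inv_left[of "G_rels m n" "replicate i \<tau>"] by (simp only: append_Nil)
    finally show ?thesis .
  next
    case (4 i)
    have "1 \<le> H_succ m i" by (simp add: H_succ_def)
    then have "subst H_to_G r = ([\<tau>'] @ H_to_G i @ [\<tau>]) @ H_to_G (H_succ m i)"
      using 4 by (simp add: H_to_G_def)
    also have "pres_eq (G_rels m n) \<dots> (H_to_G (H_succ m i) @ H_to_G (H_succ m i))"
      by (rule pres_eq_append[OF H_to_G_shift[OF 4(1,2)] pres_refl])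
    also have "pres_eq (G_rels m n) \<dots> []"
      by (rule square) fact
    finally show ?thesis .
  qed
qed

lemma G_iso_H:
  assumes "1 \<le> m"
  shows "\<exists>\<phi>. \<phi> \<in> iso (presented_group G_gens (G_rels m n)) (presented_group (H_gens m) (H_rels m n))
              \<and> \<phi> (gen G_gens (G_rels m n) 0) = gen (H_gens m) (H_rels m n) m
              \<and> \<phi> (gen G_gens (G_rels m n) 1) = gen (H_gens m) (H_rels m n) 0"
proof -
  have gf: "pres_eq (G_rels m n) (subst H_to_G (G_to_H m a)) [(a, False)]" if "a \<in> G_gens" for a
  proof (cases "a = 0")
    case True
    have "subst H_to_G (G_to_H m a) = replicate m \<tau>' @ [\<sigma>] @ replicate m \<tau>"
      using True assms by (simp add: G_to_H_def H_to_G_def)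
    also have "pres_eq (G_rels m n) \<dots> ([] @ [\<sigma>] @ replicate m \<tau>)"
      using G_t_inv_power[of m n "[]"] by simp
    also have "pres_eq (G_rels m n) \<dots> ([\<sigma>] @ [] @ [])"
      using G_t_power[of m n "[\<sigma>]" "[]"] by simp
    finally show ?thesis using True by simp
  next
    case False
    then have "a = 1" using that by (simp add: G_gens_def)
    then show ?thesis by (simp add: G_to_H_def H_to_G_def pres_refl)
  qed
  have fg: "pres_eq (H_rels m n) (subst (G_to_H m) (H_to_G a)) [(a, False)]" if "a \<in> H_gens m" for a
    using H_conj_T_power[of a m n] that assms
    by (auto simp: G_to_H_def H_to_G_def H_gens_def subst_replicate pres_refl)
  have fw: "G_to_H m a \<in> words_on (H_gens m)" if "a \<in> G_gens" for a
    using that assms by (auto simp: G_to_H_def G_gens_def H_gens_def)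
  have gw: "H_to_G a \<in> words_on G_gens" for a
    by (simp add: H_to_G_def G_gens_def)
  obtain \<phi>
    where "\<phi> \<in> iso (presented_group G_gens (G_rels m n)) (presented_group (H_gens m) (H_rels m n))"
      and \<phi>: "\<forall>u\<in>words_on G_gens.
              \<phi> (pclass G_gens (G_rels m n) u) = pclass (H_gens m) (H_rels m n) (subst (G_to_H m) u)"
    using presented_group_iso_by_subst[OF fw gw G_rels_hold_in_H[OF assms] H_rels_hold_in_G[OF assms] gf fg]
    by blast
  moreover have "\<phi> (gen G_gens (G_rels m n) 0) = gen (H_gens m) (H_rels m n) m"
    using bspec[OF \<phi>, of "[\<sigma>]"] by (simp add: gen_def G_gens_def G_to_H_def)
  moreover have "\<phi> (gen G_gens (G_rels m n) 1) = gen (H_gens m) (H_rels m n) 0"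
    using bspec[OF \<phi>, of "[\<tau>]"] by (simp add: gen_def G_gens_def G_to_H_def)
  ultimately show ?thesis by blast
qed

section \<open>Finite cases\<close>

lemma G_finite_if_closed:
  assumes "1 \<le> m" "finite W" "W \<subseteq> words_on G_gens" "[] \<in> W"
    and closed_s: "\<And>v. v \<in> W \<Longrightarrow> \<exists>v'\<in>W. pres_eq (G_rels m n) (v @ [\<sigma>]) v'"
    and closed_t: "\<And>v. v \<in> W \<Longrightarrow> \<exists>v'\<in>W. pres_eq (G_rels m n) (v @ [\<tau>]) v'"
  shows "finite (carrier (presented_group G_gens (G_rels m n)))"
proof (rule finite_presented_group_if_closed[OF assms(2-4)])
  show "\<exists>v'\<in>W. pres_eq (G_rels m n) (v @ [(a, False)]) v'" if "v \<in> W" "a \<in> G_gens" for v a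
    using that closed_s closed_t by (auto simp: G_gens_def)
  have s_inv: "pres_eq (G_rels m n) [(0, True)] (replicate 1 \<sigma>)"
    using pres_eq_inverse_letter[of "G_rels m n" 1 0] pres_eq_relator[OF G_rels_mem(1)]
    by (simp add: numeral_2_eq_2)
  have "Suc (m - 1) = m" using assms(1) by simp
  then have t_inv: "pres_eq (G_rels m n) [(1, True)] (replicate (m - 1) \<tau>)"
    using pres_eq_inverse_letter[of "G_rels m n" "m - 1" 1] pres_eq_relator[OF G_rels_mem(2)]
    by simp
  show "\<exists>k. pres_eq (G_rels m n) [(a, True)] (replicate k (a, False))" if "a \<in> G_gens" for a
    using that s_inv t_inv unfolding G_gens_def by blast
qed

lemma G_finite_m1: "finite (carrier (presented_group G_gens (G_rels 1 n)))"
proof (rule G_finite_if_closed[where W = "{[], [\<sigma>]}"])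
  show "\<exists>v'\<in>{[], [\<sigma>]}. pres_eq (G_rels 1 n) (v @ [\<sigma>]) v'" if "v \<in> {[], [\<sigma>]}" for v
    using that G_s_squared[of 1 n "[]" "[]"] by (auto intro: pres_refl)
  show "\<exists>v'\<in>{[], [\<sigma>]}. pres_eq (G_rels 1 n) (v @ [\<tau>]) v'" if "v \<in> {[], [\<sigma>]}" for v
    using that G_t_power[of 1 n "[]" "[]"] G_t_power[of 1 n "[\<sigma>]" "[]"] by auto
qed (auto simp: G_gens_def)

lemma G_n1_s_commutes_t_power:
  "pres_eq (G_rels m 1) (replicate j \<tau> @ [\<sigma>]) (\<sigma> # replicate j \<tau>)"
proof -
  let ?R = "G_rels m 1"
  have "pres_eq ?R [\<tau>, \<sigma>] ([\<tau>, \<sigma>] @ [\<sigma>, \<tau>', \<sigma>, \<tau>] @ [])"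
    using pres_eq_context[OF pres_eq_relator[OF G_rels_mem(3)[of 1 m]], of "[\<tau>, \<sigma>]" "[]"]
    by (simp add: pres_eq_sym_iff)
  also have "pres_eq ?R \<dots> ([\<tau>] @ [\<tau>', \<sigma>, \<tau>])"
    using G_s_squared[of m 1 "[\<tau>]" "[\<tau>', \<sigma>, \<tau>]"] by simp
  also have "pres_eq ?R \<dots> ([] @ [\<sigma>, \<tau>])"
    using pres_eq_context[OF pres_eq_cancel_pair[of ?R 1 False], of "[]" "[\<sigma>, \<tau>]"] by simp
  finally have commute: "pres_eq ?R [\<tau>, \<sigma>] [\<sigma>, \<tau>]" by simp
  show ?thesis
  proof (induction j)
    case (Suc j)
    have "replicate (Suc j) \<tau> @ [\<sigma>] = replicate j \<tau> @ [\<tau>, \<sigma>] @ []"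
      by (simp add: replicate_append_same[symmetric])
    also have "pres_eq ?R \<dots> ((replicate j \<tau> @ [\<sigma>]) @ [\<tau>])"
      using pres_eq_context[OF commute, of "replicate j \<tau>" "[]"] by simp
    also have "pres_eq ?R \<dots> ((\<sigma> # replicate j \<tau>) @ [\<tau>])"
      by (rule pres_eq_append[OF Suc pres_refl])
    finally show ?case by (simp add: replicate_append_same)
  qed (simp add: pres_refl)
qed

lemma G_finite_n1:
  assumes "1 \<le> m"
  shows "finite (carrier (presented_group G_gens (G_rels m 1)))"
proof -
  let ?R = "G_rels m 1"
  note commute_power = G_n1_s_commutes_t_power[of m]
  define W where "W = (\<lambda>(p, j). p @ replicate j \<tau>) ` ({[], [\<sigma>]} \<times> {..<m})"
  have inW: "p @ replicate j \<tau> \<in> W" if "p = [] \<or> p = [\<sigma>]" "j < m" for p j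
    using that unfolding W_def by (intro image_eqI[where x = "(p, j)"]) auto
  show ?thesis
  proof (rule G_finite_if_closed[OF assms, where W = W])
    show "\<exists>v'\<in>W. pres_eq ?R (v @ [\<sigma>]) v'" if "v \<in> W" for v
    proof -
      from that obtain j where j: "j < m" "v = replicate j \<tau> \<or> v = \<sigma> # replicate j \<tau>"
        by (auto simp: W_def)
      have "pres_eq ?R ((\<sigma> # replicate j \<tau>) @ [\<sigma>]) ([] @ [\<sigma>, \<sigma>] @ replicate j \<tau>)"
        using pres_eq_context[OF commute_power[of j], of "[\<sigma>]" "[]"] by simp
      also have "pres_eq ?R \<dots> (replicate j \<tau>)"
        using G_s_squared[of m 1 "[]" "replicate j \<tau>"] by simp
      finally show ?thesis using j commute_power[of j] inW[of "[]" j] inW[of "[\<sigma>]" j] by auto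
    qed
    show "\<exists>v'\<in>W. pres_eq ?R (v @ [\<tau>]) v'" if "v \<in> W" for v
    proof -
      from that obtain j p where j: "j < m" "p = [] \<or> p = [\<sigma>]" "v = p @ replicate j \<tau>"
        by (auto simp: W_def)
      have v_t: "v @ [\<tau>] = p @ replicate (Suc j) \<tau>"
        using j(3) by (simp add: replicate_append_same)
      show ?thesis
      proof (cases "Suc j < m")
        case True
        then show ?thesis using v_t inW[OF j(2) True] pres_refl by metis
      next
        case False
        then have "Suc j = m" using j(1) by simp
        then have "pres_eq ?R (v @ [\<tau>]) (p @ replicate 0 \<tau>)"
          using v_t G_t_power[of m 1 p "[]"] by simp
        moreover have "p @ replicate 0 \<tau> \<in> W" using inW[OF j(2), of 0] assms by simp
        ultimately show ?thesis by blast
      qed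
    qed
    show "[] \<in> W" using inW[of "[]" 0] assms by simp
  qed (auto simp: W_def G_gens_def)
qed

lemma concat_replicate_double: "concat (replicate k (w @ w)) = concat (replicate (2 * k) w)"
  by (induction k) auto

definition st_power :: "nat \<Rightarrow> nat word" where
  "st_power k = concat (replicate k [\<sigma>, \<tau>])"

lemma st_power_Suc: "st_power (Suc k) = st_power k @ [\<sigma>, \<tau>]"
  by (induction k) (auto simp: st_power_def)

lemma G_m2_st_power_order: "pres_eq (G_rels 2 n) (st_power (2 * n)) []"
proof -
  let ?R = "G_rels 2 n"
  have t_inv: "pres_eq ?R [\<tau>'] [\<tau>]"
    using pres_eq_inverse_letter[of ?R 1 1] pres_eq_relator[OF G_rels_mem(2)[of 2 n]]
    by (simp add: numeral_2_eq_2)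
  have "st_power (2 * n) = concat (replicate n [\<sigma>, \<tau>, \<sigma>, \<tau>])"
    using concat_replicate_double[of n "[\<sigma>, \<tau>]"] by (simp add: st_power_def)
  also have "pres_eq ?R \<dots> (concat (replicate n [\<sigma>, \<tau>', \<sigma>, \<tau>]))"
    using pres_eq_context[OF t_inv[THEN pres_sym], of "[\<sigma>]" "[\<sigma>, \<tau>]"]
    by (intro pres_eq_concat_replicate) simp
  also have "pres_eq ?R \<dots> []"
    by (rule pres_eq_relator[OF G_rels_mem(3)])
  finally show ?thesis .
qed

lemma G_m2_st_power_t: "pres_eq (G_rels 2 n) (st_power (Suc k) @ [\<tau>]) (st_power k @ [\<sigma>])"
proof -
  have "st_power (Suc k) @ [\<tau>] = (st_power k @ [\<sigma>]) @ replicate 2 \<tau> @ []"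
    by (simp add: st_power_Suc numeral_2_eq_2)
  also have "pres_eq (G_rels 2 n) \<dots> ((st_power k @ [\<sigma>]) @ [])"
    by (rule G_t_power)
  finally show ?thesis by simp
qed

lemma G_finite_m2:
  assumes "1 \<le> n"
  shows "finite (carrier (presented_group G_gens (G_rels 2 n)))"
proof -
  let ?R = "G_rels 2 n"
  define W where "W = (\<lambda>(p, k). st_power k @ p) ` ({[], [\<sigma>]} \<times> {..<2 * n})"
  have inW: "st_power k @ p \<in> W" if "p = [] \<or> p = [\<sigma>]" "k < 2 * n" for p k
    using that unfolding W_def by (intro image_eqI[where x = "(p, k)"]) auto
  show ?thesis
  proof (rule G_finite_if_closed[where W = W])
    show "\<exists>v'\<in>W. pres_eq ?R (v @ [\<sigma>]) v'" if "v \<in> W" for v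
    proof -
      from that obtain k p where k: "k < 2 * n" "p = [] \<or> p = [\<sigma>]" "v = st_power k @ p"
        by (auto simp: W_def)
      then show ?thesis
        using inW[of "[\<sigma>]" k] inW[of "[]" k] pres_refl[of ?R "st_power k @ [\<sigma>]"]
          G_s_squared[of 2 n "st_power k" "[]"] by auto
    qed
    show "\<exists>v'\<in>W. pres_eq ?R (v @ [\<tau>]) v'" if "v \<in> W" for v
    proof -
      from that obtain k p where k: "k < 2 * n" "p = [] \<or> p = [\<sigma>]" "v = st_power k @ p"
        by (auto simp: W_def)
      then consider "v = st_power k @ [\<sigma>]" "Suc k < 2 * n" | "v = st_power k @ [\<sigma>]" "Suc k = 2 * n"
        | "v = st_power 0" | k' where "k = Suc k'" "v = st_power k"
        by (cases "p = []"; cases k) (auto simp: linorder_neq_iff dest: Suc_lessI)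
      then show ?thesis
      proof cases
        case 1
        then show ?thesis using inW[of "[]" "Suc k"] pres_refl by (auto simp: st_power_Suc)
      next
        case 2
        then have "v @ [\<tau>] = st_power (2 * n)" by (simp add: st_power_Suc flip: \<open>Suc k = 2 * n\<close>)
        then have "pres_eq ?R (v @ [\<tau>]) (st_power 0 @ [])"
          using G_m2_st_power_order[of n] by (simp add: st_power_def)
        then show ?thesis using inW[of "[]" 0] k(1) by auto
      next
        case 3
        have "pres_eq ?R (v @ [\<tau>]) (st_power (Suc (2 * n - 1)) @ [\<tau>])"
          using 3 assms pres_eq_append[OF G_m2_st_power_order[THEN pres_sym] pres_refl[of ?R "[\<tau>]"]]
          by (simp add: st_power_def)
        also have "pres_eq ?R \<dots> (st_power (2 * n - 1) @ [\<sigma>])"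
          by (rule G_m2_st_power_t)
        finally show ?thesis using inW[of "[\<sigma>]" "2 * n - 1"] assms by auto
      next
        case 4
        then show ?thesis using G_m2_st_power_t inW[of "[\<sigma>]" k'] k(1) by auto
      qed
    qed
    show "[] \<in> W" using inW[of "[]" 0] assms by (simp add: st_power_def)
    show "W \<subseteq> words_on G_gens"
      by (auto simp: W_def st_power_def G_gens_def intro!: words_on_concat_replicate)
  qed (auto simp: W_def)
qed

text \<open>\<open>G\<^sub>3\<^sub>,\<^sub>2\<close> is the symmetric group of order 24: conjugation by \<open>t\<close> permutes the involutions
  \<open>s\<close>, \<open>a = t\<^sup>-\<^sup>1st\<close> (\<open>s_conj_t\<close>), \<open>b = tst\<^sup>-\<^sup>1\<close> (\<open>s_conj_t_inv\<close>) cyclically, so the relator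
  \<open>(sa)\<^sup>2\<close> yields \<open>(ab)\<^sup>2 = (bs)\<^sup>2 = 1\<close>. Hence the three commute, and every element is
  \<open>s\<^sup>x a\<^sup>y b\<^sup>z t\<^sup>d\<close> with \<open>x, y, z \<in> {0, 1}\<close> and \<open>d < 3\<close>.\<close>
definition s_conj_t :: "nat word" where
  "s_conj_t = [\<tau>', \<sigma>, \<tau>]"

definition s_conj_t_inv :: "nat word" where
  "s_conj_t_inv = [\<tau>, \<sigma>, \<tau>']"

lemma G_3_2_t_cube: "pres_eq (G_rels 3 2) (p @ [\<tau>, \<tau>, \<tau>] @ q) (p @ q)"
  using G_t_power[of 3 2 p q] by (simp add: numeral_3_eq_3)

lemma G_3_2_t_square: "pres_eq (G_rels 3 2) [\<tau>, \<tau>] [\<tau>']"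
  using pres_eq_inverse_letter[of "G_rels 3 2" 2 1] pres_eq_relator[OF G_rels_mem(2)[of 3 2]]
  by (simp add: numeral_2_eq_2 numeral_3_eq_3 pres_eq_sym_iff)

lemma G_3_2_conj_cycle:
  "pres_eq (G_rels 3 2) ([\<tau>'] @ s_conj_t @ [\<tau>]) s_conj_t_inv"
  "pres_eq (G_rels 3 2) ([\<tau>'] @ s_conj_t_inv @ [\<tau>]) [\<sigma>]"
proof -
  let ?R = "G_rels 3 2"
  have t_cancel: "pres_eq ?R (p @ [\<tau>', \<tau>] @ q) (p @ q)" "pres_eq ?R (p @ [\<tau>, \<tau>'] @ q) (p @ q)" for p q
    using pres_eq_context[OF pres_eq_cancel_pair[of ?R 1 True], of p q]
      pres_eq_context[OF pres_eq_cancel_pair[of ?R 1 False], of p q] by simp_all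
  have "[\<tau>'] @ s_conj_t @ [\<tau>] = [] @ [\<tau>', \<tau>'] @ [\<sigma>, \<tau>, \<tau>]" by (simp add: s_conj_t_def)
  also have "pres_eq ?R \<dots> ([] @ [\<tau>, \<tau>, \<tau>, \<tau>', \<tau>'] @ [\<sigma>, \<tau>, \<tau>])"
    using G_3_2_t_cube[of "[]" "[\<tau>', \<tau>']"] by (intro pres_eq_context) (simp add: pres_eq_sym_iff)
  also have "pres_eq ?R \<dots> ([\<tau>, \<sigma>] @ [\<tau>, \<tau>] @ [])"
    using t_cancel(2)[of "[\<tau>, \<tau>]" "[\<tau>', \<sigma>, \<tau>, \<tau>]"] t_cancel(2)[of "[\<tau>]" "[\<sigma>, \<tau>, \<tau>]"]
    by simp (meson pres_trans)
  also have "pres_eq ?R \<dots> ([\<tau>, \<sigma>] @ [\<tau>'] @ [])"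
    by (rule pres_eq_context[OF G_3_2_t_square])
  finally show "pres_eq ?R ([\<tau>'] @ s_conj_t @ [\<tau>]) s_conj_t_inv" by (simp add: s_conj_t_inv_def)
  show "pres_eq ?R ([\<tau>'] @ s_conj_t_inv @ [\<tau>]) [\<sigma>]"
    using t_cancel(1)[of "[]" "[\<sigma>, \<tau>', \<tau>]"] t_cancel(1)[of "[\<sigma>]" "[]"]
    by (simp add: s_conj_t_inv_def) (meson pres_trans)
qed

lemma G_3_2_involutions:
  "pres_eq (G_rels 3 2) ([\<sigma>] @ [\<sigma>]) []"
  "pres_eq (G_rels 3 2) (s_conj_t @ s_conj_t) []"
  "pres_eq (G_rels 3 2) (s_conj_t_inv @ s_conj_t_inv) []"
  "pres_eq (G_rels 3 2) ([\<sigma>] @ s_conj_t) (s_conj_t @ [\<sigma>])"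
  "pres_eq (G_rels 3 2) (s_conj_t @ s_conj_t_inv) (s_conj_t_inv @ s_conj_t)"
  "pres_eq (G_rels 3 2) (s_conj_t_inv @ [\<sigma>]) ([\<sigma>] @ s_conj_t_inv)"
proof -
  let ?R = "G_rels 3 2"
  let ?conj = "\<lambda>w v. pres_eq ?R (inv_word [\<tau>] @ w @ [\<tau>]) v"
  have conj: "?conj [\<sigma>] s_conj_t" "?conj s_conj_t s_conj_t_inv" "?conj s_conj_t_inv [\<sigma>]"
    using G_3_2_conj_cycle by (simp_all add: s_conj_t_def pres_refl)
  show ss: "pres_eq ?R ([\<sigma>] @ [\<sigma>]) []"
    using G_s_squared[of 3 2 "[]" "[]"] by simp
  show aa: "pres_eq ?R (s_conj_t @ s_conj_t) []"
    using pres_eq_conj_relation[of ?R "[[\<sigma>], [\<sigma>]]" "[\<tau>]" "[s_conj_t, s_conj_t]"] ss conj by simp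
  show bb: "pres_eq ?R (s_conj_t_inv @ s_conj_t_inv) []"
    using pres_eq_conj_relation[of ?R "[s_conj_t, s_conj_t]" "[\<tau>]" "[s_conj_t_inv, s_conj_t_inv]"] aa conj by simp
  have sasa: "pres_eq ?R ([\<sigma>] @ s_conj_t @ [\<sigma>] @ s_conj_t) []"
    using pres_eq_relator[OF G_rels_mem(3)[of 2 3]] by (simp add: s_conj_t_def numeral_2_eq_2)
  have abab: "pres_eq ?R (s_conj_t @ s_conj_t_inv @ s_conj_t @ s_conj_t_inv) []"
    using pres_eq_conj_relation[of ?R "[[\<sigma>], s_conj_t, [\<sigma>], s_conj_t]" "[\<tau>]"
        "[s_conj_t, s_conj_t_inv, s_conj_t, s_conj_t_inv]"] sasa conj by simp
  have bsbs: "pres_eq ?R (s_conj_t_inv @ [\<sigma>] @ s_conj_t_inv @ [\<sigma>]) []"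
    using pres_eq_conj_relation[of ?R "[s_conj_t, s_conj_t_inv, s_conj_t, s_conj_t_inv]" "[\<tau>]"
        "[s_conj_t_inv, [\<sigma>], s_conj_t_inv, [\<sigma>]]"]
      abab conj by simp
  show "pres_eq ?R ([\<sigma>] @ s_conj_t) (s_conj_t @ [\<sigma>])"
    by (rule pres_eq_commute_involutions[OF sasa ss aa])
  show "pres_eq ?R (s_conj_t @ s_conj_t_inv) (s_conj_t_inv @ s_conj_t)"
    by (rule pres_eq_commute_involutions[OF abab aa bb])
  show "pres_eq ?R (s_conj_t_inv @ [\<sigma>]) ([\<sigma>] @ s_conj_t_inv)"
    by (rule pres_eq_commute_involutions[OF bsbs bb ss])
qed

definition G_3_2_word :: "bool \<Rightarrow> bool \<Rightarrow> bool \<Rightarrow> nat \<Rightarrow> nat word" where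
  "G_3_2_word x y z d =
     (if x then [\<sigma>] else []) @ (if y then s_conj_t else []) @ (if z then s_conj_t_inv else [])
       @ replicate d \<tau>"

lemma G_3_2_word_flip:
  "pres_eq (G_rels 3 2) (G_3_2_word x y z 0 @ [\<sigma>]) (G_3_2_word (\<not> x) y z 0)"
  "pres_eq (G_rels 3 2) (G_3_2_word x y z 0 @ s_conj_t) (G_3_2_word x (\<not> y) z 0)"
  "pres_eq (G_rels 3 2) (G_3_2_word x y z 0 @ s_conj_t_inv) (G_3_2_word x y (\<not> z) 0)"
proof -
  let ?R = "G_rels 3 2"
  let ?S = "if x then [\<sigma>] else []" and ?A = "if y then s_conj_t else []"
    and ?B = "if z then s_conj_t_inv else []"
  note inv = G_3_2_involutions
  have flip: "pres_eq ?R ((if c then w else []) @ w) (if \<not> c then w else [])"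
    if "pres_eq ?R (w @ w) []" for c w
    using that by (simp add: pres_refl)
  have commute: "pres_eq ?R ((if c then w else []) @ u) (u @ (if c then w else []))"
    if "pres_eq ?R (w @ u) (u @ w)" for c w u
    using that by (simp add: pres_refl)
  have "G_3_2_word x y z 0 @ [\<sigma>] = (?S @ ?A) @ (?B @ [\<sigma>]) @ []" by (simp add: G_3_2_word_def)
  also have "pres_eq ?R \<dots> ((?S @ ?A) @ ([\<sigma>] @ ?B) @ [])"
    by (rule pres_eq_context[OF commute[OF inv(6)]])
  also have "\<dots> = ?S @ (?A @ [\<sigma>]) @ ?B" by simp
  also have "pres_eq ?R \<dots> (?S @ ([\<sigma>] @ ?A) @ ?B)"
    by (rule pres_eq_context[OF commute[OF inv(4)[THEN pres_sym]]])
  also have "\<dots> = [] @ (?S @ [\<sigma>]) @ (?A @ ?B)" by simp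
  also have "pres_eq ?R \<dots> ([] @ (if \<not> x then [\<sigma>] else []) @ (?A @ ?B))"
    by (rule pres_eq_context[OF flip[OF inv(1)]])
  finally show "pres_eq ?R (G_3_2_word x y z 0 @ [\<sigma>]) (G_3_2_word (\<not> x) y z 0)"
    by (simp add: G_3_2_word_def)
  have "G_3_2_word x y z 0 @ s_conj_t = (?S @ ?A) @ (?B @ s_conj_t) @ []" by (simp add: G_3_2_word_def)
  also have "pres_eq ?R \<dots> ((?S @ ?A) @ (s_conj_t @ ?B) @ [])"
    by (rule pres_eq_context[OF commute[OF inv(5)[THEN pres_sym]]])
  also have "\<dots> = ?S @ (?A @ s_conj_t) @ ?B" by simp
  also have "pres_eq ?R \<dots> (?S @ (if \<not> y then s_conj_t else []) @ ?B)"
    by (rule pres_eq_context[OF flip[OF inv(2)]])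
  finally show "pres_eq ?R (G_3_2_word x y z 0 @ s_conj_t) (G_3_2_word x (\<not> y) z 0)"
    by (simp add: G_3_2_word_def)
  show "pres_eq ?R (G_3_2_word x y z 0 @ s_conj_t_inv) (G_3_2_word x y (\<not> z) 0)"
    using pres_eq_context[OF flip[OF inv(3)], of "?S @ ?A" z "[]"] by (simp add: G_3_2_word_def)
qed

lemma G_3_2_word_append_s:
  assumes "d < 3"
  shows "\<exists>x' y' z'. pres_eq (G_rels 3 2) (G_3_2_word x y z d @ [\<sigma>]) (G_3_2_word x' y' z' d)"
proof -
  let ?R = "G_rels 3 2"
  have word: "G_3_2_word x y z d = G_3_2_word x y z 0 @ replicate d \<tau>" for x y z d
    by (simp add: G_3_2_word_def)
  have t_s: "pres_eq ?R [\<tau>, \<sigma>] (s_conj_t_inv @ [\<tau>])"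
    using pres_eq_context[OF pres_eq_cancel_pair[of ?R 1 True], of "[\<tau>, \<sigma>]" "[]"]
    by (simp add: s_conj_t_inv_def pres_eq_sym_iff)
  have tt_s: "pres_eq ?R [\<tau>, \<tau>, \<sigma>] (s_conj_t @ [\<tau>, \<tau>])"
  proof -
    have "pres_eq ?R ([] @ [\<tau>, \<tau>] @ [\<sigma>]) ([] @ [\<tau>'] @ [\<sigma>])"
      by (rule pres_eq_context[OF G_3_2_t_square])
    also have "pres_eq ?R \<dots> ([\<tau>', \<sigma>] @ [\<tau>, \<tau>, \<tau>] @ [])"
      using G_3_2_t_cube[of "[\<tau>', \<sigma>]" "[]"] by (simp add: pres_eq_sym_iff)
    finally show ?thesis by (simp add: s_conj_t_def)
  qed
  consider "d = 0" | "d = 1" | "d = 2" using assms by linarith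
  then show ?thesis
  proof cases
    case 1
    then show ?thesis using G_3_2_word_flip(1)[of x y z] by blast
  next
    case 2
    have "G_3_2_word x y z d @ [\<sigma>] = G_3_2_word x y z 0 @ [\<tau>, \<sigma>] @ []"
      using 2 word[of x y z 1] by simp
    also have "pres_eq ?R \<dots> (G_3_2_word x y z 0 @ (s_conj_t_inv @ [\<tau>]) @ [])"
      by (rule pres_eq_context[OF t_s])
    also have "\<dots> = (G_3_2_word x y z 0 @ s_conj_t_inv) @ replicate 1 \<tau>" by simp
    also have "pres_eq ?R \<dots> (G_3_2_word x y (\<not> z) 0 @ replicate 1 \<tau>)"
      by (rule pres_eq_append[OF G_3_2_word_flip(3) pres_refl])
    finally have "pres_eq ?R (G_3_2_word x y z d @ [\<sigma>]) (G_3_2_word x y (\<not> z) d)"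
      using 2 word[of x y "\<not> z" 1] by simp
    then show ?thesis by blast
  next
    case 3
    have "G_3_2_word x y z d @ [\<sigma>] = G_3_2_word x y z 0 @ [\<tau>, \<tau>, \<sigma>] @ []"
      using 3 word[of x y z 2] by (simp add: numeral_2_eq_2)
    also have "pres_eq ?R \<dots> (G_3_2_word x y z 0 @ (s_conj_t @ [\<tau>, \<tau>]) @ [])"
      by (rule pres_eq_context[OF tt_s])
    also have "\<dots> = (G_3_2_word x y z 0 @ s_conj_t) @ replicate 2 \<tau>" by (simp add: numeral_2_eq_2)
    also have "pres_eq ?R \<dots> (G_3_2_word x (\<not> y) z 0 @ replicate 2 \<tau>)"
      by (rule pres_eq_append[OF G_3_2_word_flip(2) pres_refl])
    finally have "pres_eq ?R (G_3_2_word x y z d @ [\<sigma>]) (G_3_2_word x (\<not> y) z d)"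
      using 3 word[of x "\<not> y" z 2] by simp
    then show ?thesis by blast
  qed
qed

lemma G_3_2_word_append_t:
  assumes "d < 3"
  shows "pres_eq (G_rels 3 2) (G_3_2_word x y z d @ [\<tau>]) (G_3_2_word x y z (Suc d mod 3))"
proof (cases "d = 2")
  case True
  then have "G_3_2_word x y z d @ [\<tau>] = G_3_2_word x y z 0 @ [\<tau>, \<tau>, \<tau>] @ []"
    by (simp add: G_3_2_word_def numeral_2_eq_2)
  also have "pres_eq (G_rels 3 2) \<dots> (G_3_2_word x y z 0 @ [])"
    by (rule G_3_2_t_cube)
  finally show ?thesis using True by simp
next
  case False
  then show ?thesis
    using assms by (simp add: G_3_2_word_def replicate_append_same pres_refl)
qed

lemma G_finite_3_2: "finite (carrier (presented_group G_gens (G_rels 3 2)))"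
proof (rule G_finite_if_closed)
  let ?W = "(\<lambda>(x, y, z, d). G_3_2_word x y z d) ` (UNIV \<times> UNIV \<times> UNIV \<times> {..<3})"
  have in_W: "G_3_2_word x y z d \<in> ?W" if "d < 3" for x y z d
    using that by (intro image_eqI[where x = "(x, y, z, d)"]) auto
  show "\<exists>v'\<in>?W. pres_eq (G_rels 3 2) (v @ [\<sigma>]) v'" if "v \<in> ?W" for v
  proof -
    from that obtain x y z d where d: "d < 3" and v: "v = G_3_2_word x y z d" by auto
    obtain x' y' z' where "pres_eq (G_rels 3 2) (v @ [\<sigma>]) (G_3_2_word x' y' z' d)"
      using G_3_2_word_append_s[OF d] v by blast
    then show ?thesis using in_W[OF d] by blast
  qed
  show "\<exists>v'\<in>?W. pres_eq (G_rels 3 2) (v @ [\<tau>]) v'" if "v \<in> ?W" for v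
  proof -
    from that obtain x y z d where d: "d < 3" and v: "v = G_3_2_word x y z d" by auto
    have "pres_eq (G_rels 3 2) (v @ [\<tau>]) (G_3_2_word x y z (Suc d mod 3))"
      using G_3_2_word_append_t[OF d] v by simp
    moreover have "G_3_2_word x y z (Suc d mod 3) \<in> ?W" by (rule in_W) simp
    ultimately show ?thesis by blast
  qed
  show "[] \<in> ?W"
    using in_W[of 0 False False False] by (simp add: G_3_2_word_def)
  show "?W \<subseteq> words_on G_gens"
    by (auto simp: G_3_2_word_def s_conj_t_def s_conj_t_inv_def G_gens_def)
qed simp_all

section \<open>Infinite cases\<close>

definition cyclic_pred :: "nat \<Rightarrow> nat \<Rightarrow> nat" where
  "cyclic_pred m i = (if i = 0 then m - 1 else i - 1)"

fun G_act :: "nat \<Rightarrow> (nat \<Rightarrow> 'a \<Rightarrow> 'a) \<Rightarrow> nat \<times> bool \<Rightarrow> nat \<times> 'a \<Rightarrow> nat \<times> 'a" where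
  "G_act m F x (i, z) =
     (if fst x = 0 then (i, F i z)
      else if snd x then (cyclic_pred m i, z)
      else (Suc i mod m, z))"

lemma G_act_t_power:
  assumes "i < m"
  shows "fold (G_act m F) (replicate k \<tau>) (i, z) = ((i + k) mod m, z)"
  using assms
proof (induction k arbitrary: i)
  case (Suc k)
  have "Suc i mod m < m" using Suc.prems by simp
  then show ?case using Suc.IH[of "Suc i mod m"] by (simp add: mod_add_left_eq)
qed simp

lemma G_act_conj_power:
  assumes "i < m"
  shows "fold (G_act m F) (concat (replicate k [\<sigma>, \<tau>', \<sigma>, \<tau>])) (i, z)
           = (i, ((F (cyclic_pred m i) \<circ> F i) ^^ k) z)"
proof (induction k arbitrary: z)
  case (Suc k)
  have "Suc (cyclic_pred m i) mod m = i"
    using assms by (auto simp: cyclic_pred_def)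
  then show ?case using Suc by (simp add: funpow_Suc_right del: funpow.simps)
qed simp

lemma G_act_pres_eq:
  assumes "1 \<le> m" and involution: "\<And>i z. F i (F i z) = z"
    and order: "\<And>i. i < m \<Longrightarrow> (F (cyclic_pred m i) \<circ> F i) ^^ n = id"
    and "pres_eq (G_rels m n) u v" "i < m"
  shows "fold (G_act m F) u (i, z) = fold (G_act m F) v (i, z)"
proof (rule fold_action_pres_eq[where Y = "{y. fst y < m}", OF _ _ _ assms(4)])
  show "G_act m F x y \<in> {y. fst y < m}" if "y \<in> {y. fst y < m}" for x y
    using that assms(1) by (cases y) (auto simp: cyclic_pred_def)
  show "G_act m F (a, \<not> b) (G_act m F (a, b) y) = y" if "y \<in> {y. fst y < m}" for a b y
    using that involution by (cases y) (auto simp: cyclic_pred_def mod_Suc)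
  show "fold (G_act m F) r y = y" if r: "r \<in> G_rels m n" and y_in: "y \<in> {y. fst y < m}" for r y
  proof -
    obtain j w where y: "y = (j, w)" "j < m" using y_in by (cases y) auto
    from r consider "r = [\<sigma>, \<sigma>]" | "r = replicate m \<tau>"
      | "r = concat (replicate n [\<sigma>, \<tau>', \<sigma>, \<tau>])"
      unfolding G_rels_def by blast
    then show ?thesis
    proof cases
      case 1
      then show ?thesis using involution y by simp
    next
      case 2
      then show ?thesis using G_act_t_power[OF y(2), of F m w] y by simp
    next
      case 3
      then show ?thesis using G_act_conj_power[OF y(2), of F n w] order[OF y(2)] y by simp
    qed
  qed
qed (use assms(5) in simp)

lemma G_infinite_if_translation:
  fixes F :: "nat \<Rightarrow> 'a::field_char_0 \<Rightarrow> 'a"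
  assumes "3 \<le> m" and involution: "\<And>i z. F i (F i z) = z"
    and order: "\<And>i. i < m \<Longrightarrow> (F (cyclic_pred m i) \<circ> F i) ^^ n = id"
    and translation: "\<And>z. F 0 (F 1 (F 2 (F 1 z))) = z + c" and "c \<noteq> 0"
  shows "infinite (carrier (presented_group G_gens (G_rels m n)))"
proof
  assume finite: "finite (carrier (presented_group G_gens (G_rels m n)))"
  define u :: "nat word" where "u = [\<sigma>, \<tau>, \<sigma>, \<tau>', \<sigma>, \<tau>', \<sigma>, \<tau>]"
  have u_words: "concat (replicate k u) \<in> words_on G_gens" for k
    by (rule words_on_concat_replicate) (simp add: u_def G_gens_def)
  have "fold (G_act m F) u (1, z) = (1, z + c)" for z
    using assms(1) translation by (simp add: u_def cyclic_pred_def numeral_2_eq_2)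
  then have u_power: "fold (G_act m F) (concat (replicate k u)) (1, z) = (1, z + of_nat k * c)" for k z
    by (induction k arbitrary: z) (simp_all add: algebra_simps)
  define f where "f k = pclass G_gens (G_rels m n) (concat (replicate k u))" for k
  have "inj f"
  proof (rule injI)
    fix j k assume "f j = f k"
    then have "pres_eq (G_rels m n) (concat (replicate j u)) (concat (replicate k u))"
      unfolding f_def using pclass_eq_iff u_words by blast
    then have "fold (G_act m F) (concat (replicate j u)) (1, 0) = fold (G_act m F) (concat (replicate k u)) (1, 0)"
      using G_act_pres_eq[of m F n, OF _ involution order] assms(1) by simp
    then show "j = k" using u_power[of j 0] u_power[of k 0] \<open>c \<noteq> 0\<close> by simp
  qed
  moreover have "range f \<subseteq> carrier (presented_group G_gens (G_rels m n))"
    using u_words by (auto simp: f_def carrier_presented_group)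
  ultimately show False
    using finite finite_subset finite_imageD by (metis infinite_UNIV_nat)
qed

lemma funpow_affine_eq_id:
  fixes g :: "'a::field \<Rightarrow> 'a"
  assumes g: "\<And>z. g z = \<omega> * z + c" and "\<omega> ^ n = 1" "\<omega> \<noteq> 1"
  shows "g ^^ n = id"
proof -
  have iterate: "(g ^^ k) z = \<omega> ^ k * z + c * (\<Sum>j<k. \<omega> ^ j)" for k z
  proof (induction k arbitrary: z)
    case (Suc k)
    have "(g ^^ Suc k) z = (g ^^ k) (g z)" by (simp only: funpow_Suc_right o_apply)
    also have "\<dots> = \<omega> ^ Suc k * z + c * (\<Sum>j<Suc k. \<omega> ^ j)" by (simp add: Suc g algebra_simps)
    finally show ?case .
  qed simp
  have "(\<Sum>j<n. \<omega> ^ j) = 0" using geometric_sum[OF \<open>\<omega> \<noteq> 1\<close>, of n] \<open>\<omega> ^ n = 1\<close> by simp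
  then show ?thesis using iterate \<open>\<omega> ^ n = 1\<close> by (simp add: fun_eq_iff)
qed

lemma cis_2pi_div:
  assumes "3 \<le> n"
  shows "cis (2 * pi / n) ^ n = 1" "Im (cis (2 * pi / n)) > 0"
proof -
  show "cis (2 * pi / n) ^ n = 1" using assms by (simp add: DeMoivre)
  have "0 < 2 * pi / n" "2 * pi / n < pi" using assms by (simp_all add: field_simps)
  then show "Im (cis (2 * pi / n)) > 0" by (simp add: sin_gt_zero)
qed

text \<open>Reflections in the real axis, in the line through \<open>1\<close> at angle \<open>\<pi>/n\<close> and in the line
  through \<open>0\<close> at angle \<open>2\<pi>/n\<close>; pairwise their products are rotations of order dividing \<open>n\<close>.
  The second reflection maps the third line to a parallel of the real axis, so
  \<open>f\<^sub>0 f\<^sub>1 f\<^sub>2 f\<^sub>1\<close> is a translation.\<close>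
lemma G_infinite_n_ge_3:
  assumes "3 \<le> m" "3 \<le> n"
  shows "infinite (carrier (presented_group G_gens (G_rels m n)))"
proof -
  define \<zeta> where "\<zeta> = cis (2 * pi / n)"
  have \<zeta>_n: "\<zeta> ^ n = 1" using cis_2pi_div(1)[OF assms(2)] by (simp add: \<zeta>_def)
  have \<zeta>_power: "\<zeta> ^ n = 1" "cnj \<zeta> ^ n = 1" "(\<zeta> ^ 2) ^ n = 1"
    using \<zeta>_n by (simp_all flip: complex_cnj_power) (metis power_mult_distrib power_one power2_eq_square)
  have Im_\<zeta>: "Im \<zeta> > 0" using cis_2pi_div(2)[OF assms(2)] by (simp add: \<zeta>_def)
  have \<zeta>_cnj: "\<zeta> * cnj \<zeta> = 1" by (simp add: \<zeta>_def cis_cnj cis_mult)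
  then have \<zeta>_nonzero: "\<zeta> \<noteq> 0" by auto
  have cnj_\<zeta>: "cnj \<zeta> = inverse \<zeta>" using \<zeta>_cnj \<zeta>_nonzero by (simp add: field_simps)
  have \<zeta>_ne_1: "\<zeta> \<noteq> 1" "cnj \<zeta> \<noteq> 1" "\<zeta> ^ 2 \<noteq> 1"
    using Im_\<zeta> power2_eq_1_iff[of \<zeta>] by auto
  define f0 :: "complex \<Rightarrow> complex" where "f0 z = cnj z" for z
  define f1 :: "complex \<Rightarrow> complex" where "f1 z = \<zeta> * cnj z + (1 - \<zeta>)" for z
  define f2 :: "complex \<Rightarrow> complex" where "f2 z = \<zeta> ^ 2 * cnj z" for z
  define F :: "nat \<Rightarrow> complex \<Rightarrow> complex" where
    "F i = (if i = 0 then f0 else if odd i then f1 else f2)" for i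
  have involution: "F i (F i z) = z" for i z
    using \<zeta>_cnj by (auto simp: F_def f0_def f1_def f2_def algebra_simps power2_eq_square)
  have "(f1 \<circ> f0) ^^ n = id"
    by (rule funpow_affine_eq_id[where \<omega> = \<zeta> and c = "1 - \<zeta>"]) (auto simp: f0_def f1_def \<zeta>_power \<zeta>_ne_1)
  moreover have "(f2 \<circ> f0) ^^ n = id"
    by (rule funpow_affine_eq_id[where \<omega> = "\<zeta> ^ 2" and c = 0]) (auto simp: f0_def f2_def \<zeta>_power \<zeta>_ne_1)
  moreover have "(f0 \<circ> f1) ^^ n = id"
    by (rule funpow_affine_eq_id[where \<omega> = "cnj \<zeta>" and c = "1 - cnj \<zeta>"])
      (auto simp: f0_def f1_def \<zeta>_power \<zeta>_ne_1)
  moreover have "(f2 \<circ> f1) ^^ n = id"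
    by (rule funpow_affine_eq_id[where \<omega> = \<zeta> and c = "\<zeta> ^ 2 * (1 - cnj \<zeta>)"])
      (simp_all add: f2_def f1_def \<zeta>_power \<zeta>_ne_1, simp add: cnj_\<zeta> \<zeta>_nonzero field_simps power2_eq_square)
  moreover have "(f1 \<circ> f2) ^^ n = id"
    by (rule funpow_affine_eq_id[where \<omega> = "cnj \<zeta>" and c = "1 - \<zeta>"])
      (simp_all add: f2_def f1_def \<zeta>_power \<zeta>_ne_1, simp add: cnj_\<zeta> \<zeta>_nonzero field_simps power2_eq_square)
  ultimately have order: "(F (cyclic_pred m i) \<circ> F i) ^^ n = id" for i
    using assms(1) by (cases "i = 0"; cases "i = 1"; cases "odd i"; cases "odd (m - 1)")
      (auto simp: F_def cyclic_pred_def)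
  have "F 0 (F 1 (F 2 (F 1 z))) = z + (\<zeta> - cnj \<zeta>)" for z
    by (simp add: F_def f0_def f1_def f2_def cnj_\<zeta> \<zeta>_nonzero field_simps power2_eq_square)
  moreover have "\<zeta> - cnj \<zeta> \<noteq> 0"
    using Im_\<zeta> by (auto simp: complex_eq_iff)
  ultimately show ?thesis
    using G_infinite_if_translation[of m F n, OF assms(1) involution order] by blast
qed

text \<open>For \<open>n = 2\<close> two point reflections at non-adjacent indices suffice.\<close>
lemma G_infinite_n2:
  assumes "4 \<le> m"
  shows "infinite (carrier (presented_group G_gens (G_rels m 2)))"
proof -
  define F :: "nat \<Rightarrow> complex \<Rightarrow> complex" where
    "F i z = (if i = 0 then - z else if i = 2 then 2 - z else z)" for i z
  have involution: "F i (F i z) = z" for i z by (simp add: F_def)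
  have order: "(F (cyclic_pred m i) \<circ> F i) ^^ 2 = id" for i
  proof -
    have "F (cyclic_pred m i) = id \<or> F i = id"
      using assms by (auto simp: F_def cyclic_pred_def fun_eq_iff)
    then show ?thesis using involution by (auto simp: numeral_2_eq_2 fun_eq_iff)
  qed
  have "F 0 (F 1 (F 2 (F 1 z))) = z + (-2)" for z by (simp add: F_def)
  then show ?thesis
    using G_infinite_if_translation[of m F 2, OF _ involution order] assms by simp
qed

theorem proposition4p11:
  fixes m n :: nat
  assumes "m \<ge> 1" and "n \<ge> 1"
  shows "(\<exists>\<phi>. \<phi> \<in> iso (presented_group G_gens (G_rels m n))
                         (presented_group (H_gens m) (H_rels m n))
              \<and> \<phi> (gen G_gens (G_rels m n) 0) = gen (H_gens m) (H_rels m n) m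
              \<and> \<phi> (gen G_gens (G_rels m n) 1) = gen (H_gens m) (H_rels m n) 0)
         \<and> (finite (carrier (presented_group G_gens (G_rels m n)))
              \<longleftrightarrow> (m = 1 \<or> m = 2 \<or> n = 1 \<or> (m = 3 \<and> n = 2)))"
proof (intro conjI iffI)
  show "\<exists>\<phi>. \<phi> \<in> iso (presented_group G_gens (G_rels m n)) (presented_group (H_gens m) (H_rels m n))
             \<and> \<phi> (gen G_gens (G_rels m n) 0) = gen (H_gens m) (H_rels m n) m
             \<and> \<phi> (gen G_gens (G_rels m n) 1) = gen (H_gens m) (H_rels m n) 0"
    by (rule G_iso_H[OF assms(1)])
next
  assume "m = 1 \<or> m = 2 \<or> n = 1 \<or> (m = 3 \<and> n = 2)"
  then show "finite (carrier (presented_group G_gens (G_rels m n)))"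
    using G_finite_m1 G_finite_m2[OF assms(2)] G_finite_n1[OF assms(1)] G_finite_3_2 by auto
next
  assume finite: "finite (carrier (presented_group G_gens (G_rels m n)))"
  show "m = 1 \<or> m = 2 \<or> n = 1 \<or> (m = 3 \<and> n = 2)"
  proof (rule ccontr)
    assume "\<not> ?thesis"
    then consider "3 \<le> m" "3 \<le> n" | "4 \<le> m" "n = 2"
      using assms by linarith
    then show False
      using finite G_infinite_n_ge_3 G_infinite_n2 by cases auto
  qed
qed

end
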